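(* Let $\mathfrak A\subseteq\mathcal B(\mathcal H)$ be a von Neumann algebra and $T\in\mathfrak A$. Let $E\in\mathfrak A$ be a projection such that $ETE-E$ is invertible in $E\mathfrak A E$. Then for every $A\in(I-E)\mathfrak A E$ there exists an idempotent $P\in\mathfrak A$ such that (1) $\mathcal K(P)=I-E$; (2) $\|P\|\le 1+\|TE\|+\|A\|(\|TE\|+1)$; (3) $\operatorname{Ran}((T-P)E)=\{\xi+A\xi:\ \xi\in E\mathcal H\}$.
   Context: For $S\in\mathcal B(\mathcal H)$, $\mathcal K(S)$ denotes the orthogonal projection onto $\ker S$, and $\operatorname{Ran}(S)=\{S\xi:\xi\in\mathcal H\}$. *)

theory Defs
  imports "HOL-Analysis.Analysis"
begin

text \<open>HOL-Analysis only has real inner product spaces, so we introduce complex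
Hilbert spaces as a type class: a (real) Banach space with a compatible complex
scalar multiplication and a complex inner product inducing the norm.\<close>

class chilbert = banach +
  fixes scaleC :: "complex \<Rightarrow> 'a \<Rightarrow> 'a" (infixr \<open>*\<^sub>C\<close> 75)
    and cinner :: "'a \<Rightarrow> 'a \<Rightarrow> complex"
  assumes scaleC_of_real: "complex_of_real r *\<^sub>C x = r *\<^sub>R x"
    and scaleC_add_right: "a *\<^sub>C (x + y) = a *\<^sub>C x + a *\<^sub>C y"
    and scaleC_add_left: "(a + b) *\<^sub>C x = a *\<^sub>C x + b *\<^sub>C x"
    and scaleC_scaleC: "a *\<^sub>C (b *\<^sub>C x) = (a * b) *\<^sub>C x"
    and scaleC_one: "1 *\<^sub>C x = x"
    and cinner_add_right: "cinner x (y + z) = cinner x y + cinner x z"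
    and cinner_scaleC_right: "cinner x (a *\<^sub>C y) = a * cinner x y"
    and cinner_commute: "cinner x y = cnj (cinner y x)"
    and cinner_pos: "0 \<le> Re (cinner x x)"
    and cinner_eq_zero: "cinner x x = 0 \<longleftrightarrow> x = 0"
    and norm_cinner: "norm x = sqrt (Re (cinner x x))"

definition clinear_op :: "('a::chilbert \<Rightarrow> 'a) \<Rightarrow> bool" where
  "clinear_op f \<longleftrightarrow> (\<forall>x y. f (x + y) = f x + f y) \<and> (\<forall>c x. f (c *\<^sub>C x) = c *\<^sub>C f x)"

definition bop :: "('a::chilbert \<Rightarrow> 'a) set" where
  "bop = {f. clinear_op f \<and> (\<exists>K. \<forall>x. norm (f x) \<le> norm x * K)}"

definition adj :: "('a::chilbert \<Rightarrow> 'a) \<Rightarrow> ('a \<Rightarrow> 'a)" where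
  "adj T = (THE S. S \<in> bop \<and> (\<forall>x y. cinner (T x) y = cinner x (S y)))"

definition commutant :: "('a::chilbert \<Rightarrow> 'a) set \<Rightarrow> ('a \<Rightarrow> 'a) set" where
  "commutant M = {S \<in> bop. \<forall>T\<in>M. S \<circ> T = T \<circ> S}"

definition von_neumann_algebra :: "('a::chilbert \<Rightarrow> 'a) set \<Rightarrow> bool" where
  "von_neumann_algebra M \<longleftrightarrow>
     M \<subseteq> bop \<and> id \<in> M \<and>
     (\<forall>S\<in>M. \<forall>T\<in>M. (\<lambda>x. S x + T x) \<in> M \<and> S \<circ> T \<in> M) \<and>
     (\<forall>c. \<forall>T\<in>M. (\<lambda>x. c *\<^sub>C T x) \<in> M) \<and>
     (\<forall>T\<in>M. adj T \<in> M) \<and>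
     commutant (commutant M) = M"

definition is_projection :: "('a::chilbert \<Rightarrow> 'a) \<Rightarrow> bool" where
  "is_projection E \<longleftrightarrow> E \<in> bop \<and> E \<circ> E = E \<and> adj E = E"

definition is_idempotent :: "('a::chilbert \<Rightarrow> 'a) \<Rightarrow> bool" where
  "is_idempotent P \<longleftrightarrow> P \<in> bop \<and> P \<circ> P = P"

definition kerproj :: "('a::chilbert \<Rightarrow> 'a) \<Rightarrow> ('a \<Rightarrow> 'a)" where
  "kerproj S = (THE Q. is_projection Q \<and> range Q = {x. S x = 0})"

definition corner :: "('a::chilbert \<Rightarrow> 'a) \<Rightarrow> ('a \<Rightarrow> 'a) set \<Rightarrow> ('a \<Rightarrow> 'a) \<Rightarrow> ('a \<Rightarrow> 'a) set" where
  "corner X M Y = {X \<circ> T \<circ> Y | T. T \<in> M}"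

text \<open>Invertibility of \<open>S\<close> in the corner algebra \<open>E \<AA> E\<close> (whose unit is \<open>E\<close>).\<close>
definition invertible_in_corner :: "('a::chilbert \<Rightarrow> 'a) set \<Rightarrow> ('a \<Rightarrow> 'a) \<Rightarrow> ('a \<Rightarrow> 'a) \<Rightarrow> bool" where
  "invertible_in_corner M E S \<longleftrightarrow>
     (\<exists>B\<in>corner E M E. B \<circ> S = E \<and> S \<circ> B = E)"

end

theory Submission
  imports Defs
begin

(*
  For A in (I - E) M E put S = ETE - E and P = E + (I - E) TE - AS. As EA = 0 and S = ESE,
  we get EP = E and PE = P: so P is idempotent and ker P = ker E, i.e. K(P) = I - E. The norm
  bound is the triangle inequality together with |E|, |I - E| <= 1 and |S| <= |TE| + 1.
  Finally (T - P)E = S + AS, and S maps onto EH because it is invertible in the corner EME.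

  Since adjoints are introduced by a definite description, knowing that a projection is
  self-adjoint (needed to identify K(P)) requires adjoints to exist; they are obtained from
  the Riesz representation theorem, via nearest points in closed convex sets.
*)

lemma scaleC_minus_one: "(-1::complex) *\<^sub>C (x::'a::chilbert) = - x"
  using scaleC_of_real[of "-1" x] by simp

lemma scaleC_diff_right: "c *\<^sub>C (x - y) = c *\<^sub>C x - c *\<^sub>C (y::'a::chilbert)"
  by (metis scaleC_add_right diff_add_cancel eq_diff_eq)

lemma cinner_zero_right [simp]: "cinner (x::'a::chilbert) 0 = 0"
  using cinner_add_right[of x 0 0] by simp

lemma cinner_zero_left [simp]: "cinner 0 (x::'a::chilbert) = 0"
  using cinner_commute[of 0 x] by simp

lemma cinner_add_left: "cinner ((x::'a::chilbert) + y) z = cinner x z + cinner y z"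
  by (metis cinner_add_right cinner_commute complex_cnj_add)

lemma cinner_scaleC_left: "cinner (a *\<^sub>C (x::'a::chilbert)) y = cnj a * cinner x y"
  by (metis cinner_commute cinner_scaleC_right complex_cnj_mult)

lemma cinner_minus_right: "cinner (x::'a::chilbert) (- y) = - cinner x y"
  by (metis cinner_scaleC_right scaleC_minus_one mult_minus1)

lemma cinner_minus_left: "cinner (- (x::'a::chilbert)) y = - cinner x y"
  by (metis cinner_commute cinner_minus_right complex_cnj_minus)

lemma cinner_diff_right: "cinner (x::'a::chilbert) (y - z) = cinner x y - cinner x z"
  by (metis cinner_add_right cinner_minus_right diff_conv_add_uminus)

lemma cinner_diff_left: "cinner ((x::'a::chilbert) - y) z = cinner x z - cinner y z"
  by (metis cinner_add_left cinner_minus_left diff_conv_add_uminus)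

lemma cinner_self: "cinner (x::'a::chilbert) x = complex_of_real ((norm x)\<^sup>2)"
proof -
  have "Im (cinner x x) = 0"
    using cinner_commute[of x x] by (metis complex_cnj_cancel_iff cnj.simps(2) neg_equal_zero)
  moreover have "Re (cinner x x) = (norm x)\<^sup>2"
    using norm_cinner[of x] cinner_pos[of x] by simp
  ultimately show ?thesis by (simp add: complex_eq_iff)
qed

lemma cinner_eq_zero_commute: "cinner x y = 0 \<longleftrightarrow> cinner y (x::'a::chilbert) = 0"
  by (metis cinner_commute complex_cnj_zero_iff)

lemma cinner_ext: "(\<And>x. cinner x a = cinner x (b::'a::chilbert)) \<Longrightarrow> a = b"
  using cinner_eq_zero[of "a - b"] by (simp add: cinner_diff_left cinner_diff_right)

lemma norm_add_sq: "(norm ((x::'a::chilbert) + y))\<^sup>2 = (norm x)\<^sup>2 + (norm y)\<^sup>2 + 2 * Re (cinner x y)"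
proof -
  have "(norm (x + y))\<^sup>2 = Re (cinner (x + y) (x + y))"
    by (simp only: cinner_self Re_complex_of_real)
  also have "\<dots> = (norm x)\<^sup>2 + (norm y)\<^sup>2 + Re (cinner x y) + Re (cinner y x)"
    unfolding cinner_add_left cinner_add_right by (simp add: cinner_self)
  also have "Re (cinner y x) = Re (cinner x y)"
    by (subst cinner_commute) simp
  finally show ?thesis
    by simp
qed

lemma parallelogram_law:
  "(norm ((x::'a::chilbert) + y))\<^sup>2 + (norm (x - y))\<^sup>2 = 2 * (norm x)\<^sup>2 + 2 * (norm y)\<^sup>2"
  using norm_add_sq[of x y] norm_add_sq[of x "- y"] by (simp add: cinner_minus_right)

lemma norm_diff_component_sq:
  fixes x y :: "'a::chilbert"
  assumes "y \<noteq> 0"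
  shows "(norm (x - (cinner y x / cinner y y) *\<^sub>C y))\<^sup>2
           = (norm x)\<^sup>2 - (cmod (cinner y x))\<^sup>2 / (norm y)\<^sup>2"
proof -
  let ?c = "cinner y x / cinner y y"
  have yy: "cinner y y \<noteq> 0" "cnj (cinner y y) = cinner y y"
    using assms cinner_eq_zero by (auto intro: cinner_commute[symmetric])
  have cnj_c: "cnj ?c = cinner x y / cinner y y"
    using yy(2) by (simp add: cinner_commute[of y x])
  have "cinner (x - ?c *\<^sub>C y) (x - ?c *\<^sub>C y)
          = cinner x x - ?c * cinner x y - cnj ?c * cinner y x + cnj ?c * ?c * cinner y y"
    by (simp add: cinner_diff_left cinner_diff_right cinner_scaleC_left cinner_scaleC_right
        algebra_simps)
  also have "\<dots> = cinner x x - cinner y x * cinner x y / cinner y y"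
    unfolding cnj_c using yy(1) by (simp add: field_simps)
  also have "cinner y x * cinner x y = complex_of_real ((cmod (cinner y x))\<^sup>2)"
    by (subst cinner_commute[of x y]) (rule complex_norm_square[symmetric])
  finally have "complex_of_real ((norm (x - ?c *\<^sub>C y))\<^sup>2)
      = complex_of_real ((norm x)\<^sup>2 - (cmod (cinner y x))\<^sup>2 / (norm y)\<^sup>2)"
    by (simp only: cinner_self of_real_diff of_real_divide)
  then show ?thesis
    using of_real_eq_iff by blast
qed

lemma Cauchy_Schwarz_cinner: "cmod (cinner (x::'a::chilbert) y) \<le> norm x * norm y"
proof (cases "x = 0")
  case False
  then have "(norm x)\<^sup>2 > 0"
    by simp
  moreover have "(cmod (cinner x y))\<^sup>2 / (norm x)\<^sup>2 \<le> (norm y)\<^sup>2"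
    by (metis norm_diff_component_sq[OF False] zero_le_power2 diff_ge_0_iff_ge)
  ultimately have "(cmod (cinner x y))\<^sup>2 \<le> (norm x * norm y)\<^sup>2"
    by (simp add: pos_divide_le_eq power_mult_distrib mult.commute)
  then show ?thesis
    by (rule power2_le_imp_le) simp
qed simp

section \<open>Nearest points and the Riesz representation theorem\<close>

lemma infdist_less_imp_ex:
  assumes "A \<noteq> {}" "infdist x A < e"
  shows "\<exists>a\<in>A. dist x a < e"
  using assms by (simp add: infdist_notempty cINF_less_iff)

lemma closed_convex_nearest_point:
  fixes N :: "'a::chilbert set"
  assumes "closed N" "convex N" "N \<noteq> {}"
  obtains n where "n \<in> N" "\<And>m. m \<in> N \<Longrightarrow> dist x n \<le> dist x m"
proof -
  define d where "d = infdist x N"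
  have "d \<ge> 0"
    unfolding d_def by (rule infdist_nonneg)
  text \<open>Parallelogram law around the midpoint of \<open>a\<close> and \<open>b\<close>, which lies in \<open>N\<close>.\<close>
  have close: "(dist a b)\<^sup>2 \<le> 2 * (dist x a)\<^sup>2 + 2 * (dist x b)\<^sup>2 - 4 * d\<^sup>2"
    if "a \<in> N" "b \<in> N" for a b
  proof -
    have "(1/2) *\<^sub>R a + (1/2) *\<^sub>R b \<in> N"
      using \<open>convex N\<close> that by (simp add: convex_def)
    then have "2 * d \<le> 2 * dist x ((1/2) *\<^sub>R a + (1/2) *\<^sub>R b)"
      unfolding d_def by (simp add: infdist_le)
    also have "\<dots> = norm (2 *\<^sub>R (x - ((1/2) *\<^sub>R a + (1/2) *\<^sub>R b)))"
      by (simp add: dist_norm)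
    also have "2 *\<^sub>R (x - ((1/2) *\<^sub>R a + (1/2) *\<^sub>R b)) = (x - a) + (x - b)"
      by (simp add: algebra_simps scaleR_2)
    finally have "(2 * d)\<^sup>2 \<le> (norm ((x - a) + (x - b)))\<^sup>2"
      by (rule power_mono) (use \<open>d \<ge> 0\<close> in simp)
    moreover have "(norm ((x - a) + (x - b)))\<^sup>2 + (norm (b - a))\<^sup>2
        = 2 * (dist x a)\<^sup>2 + 2 * (dist x b)\<^sup>2"
      using parallelogram_law[of "x - a" "x - b"] by (simp add: dist_norm)
    ultimately show ?thesis
      by (simp add: dist_norm norm_minus_commute power_mult_distrib)
  qed
  have "\<exists>m\<in>N. (dist x m)\<^sup>2 < d\<^sup>2 + 1 / real (Suc k)" for k
  proof -
    have "d < sqrt (d\<^sup>2 + 1 / real (Suc k))"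
      using \<open>d \<ge> 0\<close> real_less_rsqrt by simp
    then obtain m where "m \<in> N" "dist x m < sqrt (d\<^sup>2 + 1 / real (Suc k))"
      using infdist_less_imp_ex[OF \<open>N \<noteq> {}\<close>] unfolding d_def by blast
    moreover have "(dist x m)\<^sup>2 < (sqrt (d\<^sup>2 + 1 / real (Suc k)))\<^sup>2"
      using \<open>dist x m < _\<close> by (rule power_strict_mono) simp_all
    ultimately show ?thesis
      by auto
  qed
  then obtain s where s_in: "\<And>k. s k \<in> N"
    and s_dist: "\<And>k. (dist x (s k))\<^sup>2 < d\<^sup>2 + 1 / real (Suc k)"
    by metis
  have "Cauchy s"
  proof (rule metric_CauchyI)
    fix e :: real
    assume "0 < e"
    then obtain M where M: "1 / real (Suc M) < e\<^sup>2 / 4"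
      using reals_Archimedean[of "e\<^sup>2 / 4"] by (auto simp: inverse_eq_divide)
    have "dist (s j) (s k) < e" if "M \<le> j" "M \<le> k" for j k
    proof -
      have "1 / real (Suc j) \<le> 1 / real (Suc M)" "1 / real (Suc k) \<le> 1 / real (Suc M)"
        using that by (simp_all add: frac_le)
      then have "(dist (s j) (s k))\<^sup>2 < e\<^sup>2"
        using close[OF s_in s_in, of j k] s_dist[of j] s_dist[of k] M by linarith
      then show ?thesis
        using \<open>0 < e\<close> by (simp add: power_less_imp_less_base)
    qed
    then show "\<exists>M. \<forall>j\<ge>M. \<forall>k\<ge>M. dist (s j) (s k) < e"
      by blast
  qed
  then obtain n where lim: "s \<longlonglongrightarrow> n"
    using Cauchy_convergent_iff convergent_def by blast
  have "n \<in> N"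
    using closed_sequentially[OF \<open>closed N\<close> _ lim] s_in by blast
  have "(dist x n)\<^sup>2 \<le> d\<^sup>2"
  proof (rule LIMSEQ_le)
    show "(\<lambda>k. (dist x (s k))\<^sup>2) \<longlonglongrightarrow> (dist x n)\<^sup>2"
      by (intro tendsto_intros lim)
    show "(\<lambda>k. d\<^sup>2 + 1 / real (Suc k)) \<longlonglongrightarrow> d\<^sup>2"
      using tendsto_add[OF tendsto_const LIMSEQ_inverse_real_of_nat, of "d\<^sup>2"]
      by (simp add: inverse_eq_divide)
    show "\<exists>N. \<forall>k\<ge>N. (dist x (s k))\<^sup>2 \<le> d\<^sup>2 + 1 / real (Suc k)"
      by (intro exI[of _ 0] allI impI less_imp_le s_dist)
  qed
  then have "dist x n \<le> d"
    using \<open>d \<ge> 0\<close> by (rule power2_le_imp_le)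
  then show thesis
    using that[OF \<open>n \<in> N\<close>] infdist_le unfolding d_def by (meson order_trans)
qed

definition csubspace :: "'a::chilbert set \<Rightarrow> bool" where
  "csubspace N \<longleftrightarrow> 0 \<in> N \<and> (\<forall>a\<in>N. \<forall>b\<in>N. a + b \<in> N) \<and> (\<forall>c. \<forall>a\<in>N. c *\<^sub>C a \<in> N)"

lemma csubspace_convex: "csubspace N \<Longrightarrow> convex N"
  unfolding csubspace_def convex_def by (simp flip: scaleC_of_real)

lemma nearest_point_residual_orthogonal:
  fixes N :: "'a::chilbert set"
  assumes "csubspace N" "n \<in> N" "\<And>m. m \<in> N \<Longrightarrow> dist x n \<le> dist x m" "m \<in> N"
  shows "cinner m (x - n) = 0"
proof (cases "m = 0")
  case False
  let ?c = "cinner m (x - n) / cinner m m"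
  have "n + ?c *\<^sub>C m \<in> N"
    using assms(1,2,4) unfolding csubspace_def by blast
  then have "norm (x - n) \<le> norm ((x - n) - ?c *\<^sub>C m)"
    using assms(3) by (simp add: dist_norm diff_diff_eq)
  then have "(norm (x - n))\<^sup>2 \<le> (norm ((x - n) - ?c *\<^sub>C m))\<^sup>2"
    by (rule power_mono) simp
  then have "(cmod (cinner m (x - n)))\<^sup>2 / (norm m)\<^sup>2 \<le> 0"
    unfolding norm_diff_component_sq[OF False] by simp
  with False show ?thesis
    by (simp add: divide_le_0_iff)
qed simp

lemma riesz_representation:
  fixes f :: "'a::chilbert \<Rightarrow> complex"
  assumes "bounded_linear f" and f_scaleC: "\<And>c x. f (c *\<^sub>C x) = c * f x"
  shows "\<exists>z. \<forall>x. f x = cinner z x"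
proof (cases "\<forall>x. f x = 0")
  case True
  then show ?thesis
    by (intro exI[of _ 0]) simp
next
  case False
  then obtain x0 where "f x0 \<noteq> 0"
    by blast
  interpret f: bounded_linear f by fact
  define N where "N = {x. f x = 0}"
  have "csubspace N"
    unfolding csubspace_def N_def by (simp add: f.add f.zero f_scaleC)
  moreover have "closed N"
    unfolding N_def by (intro closed_Collect_eq linear_continuous_on assms(1) continuous_on_const)
  moreover have "N \<noteq> {}"
    unfolding N_def using f.zero by blast
  ultimately obtain n where "n \<in> N" and nearest: "\<And>m. m \<in> N \<Longrightarrow> dist x0 n \<le> dist x0 m"
    using closed_convex_nearest_point csubspace_convex by metis
  define w where "w = x0 - n"
  have "f w = f x0"
    using \<open>n \<in> N\<close> by (simp add: w_def N_def f.diff)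
  then have "cinner w w \<noteq> 0"
    using \<open>f x0 \<noteq> 0\<close> by (auto simp: cinner_eq_zero)
  have w_orth: "cinner w m = 0" if "m \<in> N" for m
    using nearest_point_residual_orthogonal[OF \<open>csubspace N\<close> \<open>n \<in> N\<close> nearest that]
    by (simp add: w_def cinner_eq_zero_commute)
  show ?thesis
  proof (intro exI allI)
    fix x
    have "x - (f x / f w) *\<^sub>C w \<in> N"
      using \<open>f w = f x0\<close> \<open>f x0 \<noteq> 0\<close> by (simp add: N_def f.diff f_scaleC)
    then have "cinner w (x - (f x / f w) *\<^sub>C w) = 0"
      by (rule w_orth)
    then have "cinner w x = (f x / f w) * cinner w w"
      by (simp add: cinner_diff_right cinner_scaleC_right)
    then have "cinner (cnj (f w / cinner w w) *\<^sub>C w) x = f w / cinner w w * ((f x / f w) * cinner w w)"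
      by (simp add: cinner_scaleC_left)
    then show "f x = cinner (cnj (f w / cinner w w) *\<^sub>C w) x"
      using \<open>cinner w w \<noteq> 0\<close> \<open>f w = f x0\<close> \<open>f x0 \<noteq> 0\<close> by simp
  qed
qed

section \<open>Bounded operators and adjoints\<close>

lemma bop_add: "T \<in> bop \<Longrightarrow> T (x + y) = T x + T y"
  by (simp add: bop_def clinear_op_def)

lemma bop_scaleC: "T \<in> bop \<Longrightarrow> T (c *\<^sub>C x) = c *\<^sub>C T x"
  by (simp add: bop_def clinear_op_def)

lemma bop_bounded_linear: "T \<in> bop \<Longrightarrow> bounded_linear (T::'a::chilbert \<Rightarrow> 'a)"
proof -
  assume "T \<in> bop"
  then obtain K where "\<And>x. norm (T x) \<le> norm x * K"
    by (auto simp: bop_def)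
  with \<open>T \<in> bop\<close> show ?thesis
    by (intro bounded_linear_intro[of T K]) (simp_all add: bop_add bop_scaleC flip: scaleC_of_real)
qed

lemma bop_zero: "T \<in> bop \<Longrightarrow> T (0::'a::chilbert) = 0"
  using bop_bounded_linear linear_simps(3) by blast

lemma bop_diff: "T \<in> bop \<Longrightarrow> T (x - y) = T x - T (y::'a::chilbert)"
  using bop_bounded_linear linear_simps(2) by blast

lemma bounded_linear_cinner_right: "bounded_linear (cinner (y::'a::chilbert))"
proof (rule bounded_linear_intro[of _ "norm y"])
  show "cmod (cinner y x) \<le> norm x * norm y" for x
    using Cauchy_Schwarz_cinner[of y x] by (simp add: mult.commute)
qed (simp_all add: cinner_add_right scaleR_conv_of_real flip: cinner_scaleC_right scaleC_of_real)

lemma adjoint_exists: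
  assumes "(T::'a::chilbert \<Rightarrow> 'a) \<in> bop"
  shows "\<exists>S\<in>bop. \<forall>x y. cinner (T x) y = cinner x (S y)"
proof -
  have "\<exists>z. \<forall>x. cinner y (T x) = cinner z x" for y
  proof (rule riesz_representation)
    show "bounded_linear (\<lambda>x. cinner y (T x))"
      using bounded_linear_compose[OF bounded_linear_cinner_right bop_bounded_linear[OF assms]] .
  qed (simp add: bop_scaleC[OF assms] cinner_scaleC_right)
  then obtain S where S: "\<And>x y. cinner y (T x) = cinner (S y) x"
    by metis
  have adjoint: "cinner (T x) y = cinner x (S y)" for x y
    by (metis S cinner_commute)
  obtain K where K: "\<And>x. norm (T x) \<le> norm x * K" "K \<ge> 0"
    using bounded_linear.nonneg_bounded[OF bop_bounded_linear[OF assms]] by (auto simp: mult.commute)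
  have "norm (S y) \<le> norm y * K" for y
  proof -
    have "(norm (S y))\<^sup>2 = Re (cinner (T (S y)) y)"
      by (simp add: adjoint cinner_self)
    also have "\<dots> \<le> norm (T (S y)) * norm y"
      using complex_Re_le_cmod Cauchy_Schwarz_cinner order_trans by blast
    also have "\<dots> \<le> (norm (S y) * K) * norm y"
      by (rule mult_right_mono[OF K(1)]) simp
    finally have "norm (S y) * norm (S y) \<le> norm (S y) * (norm y * K)"
      by (simp add: power2_eq_square algebra_simps)
    then show ?thesis
      using K(2) by (cases "S y = 0") (simp_all add: mult_le_cancel_left)
  qed
  moreover have "S (a + b) = S a + S b" "S (c *\<^sub>C a) = c *\<^sub>C S a" for a b c
    by (rule cinner_ext, simp add: adjoint[symmetric] cinner_add_right cinner_scaleC_right)+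
  ultimately have "S \<in> bop"
    unfolding bop_def clinear_op_def by blast
  with adjoint show ?thesis
    by blast
qed

lemma cinner_adj: "T \<in> bop \<Longrightarrow> cinner (T x) y = cinner x (adj T y)"
proof -
  assume "T \<in> bop"
  then obtain S where S: "S \<in> bop" "\<forall>x y. cinner (T x) y = cinner x (S y)"
    using adjoint_exists by blast
  have "adj T = S"
    unfolding adj_def
  proof (rule the_equality)
    fix S' assume "S' \<in> bop \<and> (\<forall>x y. cinner (T x) y = cinner x (S' y))"
    with S show "S' = S"
      by (intro ext cinner_ext) simp
  qed (use S in blast)
  with S show ?thesis
    by simp
qed

lemma adj_eqI: "T \<in> bop \<Longrightarrow> (\<And>x y. cinner (T x) y = cinner x (S y)) \<Longrightarrow> adj T = S"
  by (intro ext cinner_ext) (metis cinner_adj)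

lemma projection_self_adjoint: "is_projection Q \<Longrightarrow> cinner (Q x) y = cinner x (Q y)"
  unfolding is_projection_def by (metis cinner_adj)

lemma projection_idem: "is_projection E \<Longrightarrow> E (E x) = E x"
  unfolding is_projection_def by (metis comp_apply)

lemma projection_bop: "is_projection E \<Longrightarrow> E \<in> bop"
  unfolding is_projection_def by blast

lemma projection_apply_complement: "is_projection E \<Longrightarrow> E (x - E x) = 0"
  by (simp add: bop_diff projection_bop projection_idem)

lemma projection_pythagoras:
  assumes "is_projection E"
  shows "(norm (E x))\<^sup>2 + (norm (x - E x))\<^sup>2 = (norm x)\<^sup>2"
proof -
  have "cinner (E x) (x - E x) = 0"
    using assms by (simp add: projection_self_adjoint projection_apply_complement)
  then show ?thesis
    using norm_add_sq[of "E x" "x - E x"] by simp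
qed

lemma norm_projection_le:
  assumes "is_projection E"
  shows "norm (E x) \<le> norm x" "norm (x - E x) \<le> norm x"
proof -
  have "(norm (E x))\<^sup>2 \<le> (norm x)\<^sup>2" "(norm (x - E x))\<^sup>2 \<le> (norm x)\<^sup>2"
    using projection_pythagoras[OF assms, of x]
      zero_le_power2[of "norm (E x)"] zero_le_power2[of "norm (x - E x)"] by linarith+
  then show "norm (E x) \<le> norm x" "norm (x - E x) \<le> norm x"
    using norm_ge_zero by (blast intro: power2_le_imp_le)+
qed

lemma projection_complement:
  assumes "is_projection E"
  shows "is_projection (\<lambda>x. x - E x)"
proof -
  have "clinear_op (\<lambda>x. x - E x)"
    using projection_bop[OF assms] by (simp add: clinear_op_def bop_add bop_scaleC scaleC_diff_right)
  moreover have "\<forall>x. norm (x - E x) \<le> norm x * 1"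
    using norm_projection_le(2)[OF assms] by simp
  ultimately have "(\<lambda>x. x - E x) \<in> bop"
    unfolding bop_def by blast
  moreover have "adj (\<lambda>x. x - E x) = (\<lambda>x. x - E x)"
    using calculation
    by (rule adj_eqI) (simp add: cinner_diff_left cinner_diff_right projection_self_adjoint[OF assms])
  ultimately show ?thesis
    using assms by (simp add: is_projection_def comp_def projection_apply_complement)
qed

lemma projection_fixes_range: "is_projection Q \<Longrightarrow> x \<in> range Q \<Longrightarrow> Q x = x"
  using projection_idem by blast

lemma projection_eqI:
  assumes Q: "is_projection Q" and R: "is_projection R" and "range Q = range R"
  shows "Q = R"
proof (intro ext cinner_ext)
  fix x y
  have RQ: "R (Q x) = Q x" and QR: "Q (R y) = R y"
    using projection_fixes_range[OF R, of "Q x"] projection_fixes_range[OF Q, of "R y"]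
      \<open>range Q = range R\<close> by auto
  have "cinner y (Q x) = cinner (R y) (Q x)"
    by (simp add: RQ projection_self_adjoint[OF R, of y])
  also have "\<dots> = cinner y (R x)"
    by (metis QR projection_self_adjoint[OF Q] projection_self_adjoint[OF R])
  finally show "cinner y (Q x) = cinner y (R x)" .
qed

lemma kerproj_eqI: "is_projection Q \<Longrightarrow> range Q = {x. S x = 0} \<Longrightarrow> kerproj S = Q"
  unfolding kerproj_def by (rule the_equality) (simp_all add: projection_eqI)

lemma range_projection_complement: "is_projection E \<Longrightarrow> range (\<lambda>x. x - E x) = {x. E x = 0}"
  by (auto simp: projection_apply_complement) (metis diff_zero rangeI)

lemma idempotent_kerproj_complement:
  assumes E: "is_projection E" and "P \<in> bop"
    and EP: "\<And>x. E (P x) = E x" and PE: "\<And>x. P (E x) = P x"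
  shows "is_idempotent P" "kerproj P = (\<lambda>x. x - E x)"
proof -
  have "P (P x) = P x" for x
    by (metis EP PE)
  with \<open>P \<in> bop\<close> show "is_idempotent P"
    by (simp add: is_idempotent_def fun_eq_iff)
  have "P 0 = 0" "E 0 = 0"
    using \<open>P \<in> bop\<close> E by (simp_all add: bop_zero projection_bop)
  then have "P x = 0 \<longleftrightarrow> E x = 0" for x
    using EP[of x] PE[of x] by auto
  then show "kerproj P = (\<lambda>x. x - E x)"
    by (simp add: kerproj_eqI projection_complement[OF E] range_projection_complement[OF E])
qed

section \<open>The idempotent\<close>

lemma von_neumann_algebra_bop: "von_neumann_algebra M \<Longrightarrow> X \<in> M \<Longrightarrow> X \<in> bop"
  unfolding von_neumann_algebra_def by blast

lemma von_neumann_algebra_ident: "von_neumann_algebra M \<Longrightarrow> (\<lambda>x. x) \<in> M"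
  unfolding von_neumann_algebra_def by (simp add: id_def)

lemma von_neumann_algebra_add:
  "von_neumann_algebra M \<Longrightarrow> X \<in> M \<Longrightarrow> Y \<in> M \<Longrightarrow> (\<lambda>x. X x + Y x) \<in> M"
  unfolding von_neumann_algebra_def by blast

text \<open>Stated with \<open>\<circ>\<close>: the pattern \<open>\<lambda>x. X (Y x)\<close> would unify with every operator and make
  \<open>intro\<close> loop.\<close>
lemma von_neumann_algebra_comp:
  "von_neumann_algebra M \<Longrightarrow> X \<in> M \<Longrightarrow> Y \<in> M \<Longrightarrow> X \<circ> Y \<in> M"
  unfolding von_neumann_algebra_def by blast

lemma von_neumann_algebra_diff:
  assumes "von_neumann_algebra M" "X \<in> M" "Y \<in> M"
  shows "(\<lambda>x. X x - Y x) \<in> M"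
proof -
  have "(\<lambda>x. (-1) *\<^sub>C Y x) \<in> M"
    using assms unfolding von_neumann_algebra_def by blast
  then have "(\<lambda>x. X x + (-1) *\<^sub>C Y x) \<in> M"
    by (rule von_neumann_algebra_add[OF assms(1,2)])
  then show ?thesis
    by (simp add: scaleC_minus_one)
qed

lemmas von_neumann_algebra_closed =
  von_neumann_algebra_ident von_neumann_algebra_add von_neumann_algebra_comp von_neumann_algebra_diff

definition corner_idempotent :: "('a::chilbert \<Rightarrow> 'a) \<Rightarrow> ('a \<Rightarrow> 'a) \<Rightarrow> ('a \<Rightarrow> 'a) \<Rightarrow> 'a \<Rightarrow> 'a" where
  "corner_idempotent T E A = (\<lambda>x. E x + (T (E x) - E (T (E x))) - A (E (T (E x)) - E x))"

lemma von_neumann_algebra_corner_idempotent: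
  assumes "von_neumann_algebra M" "T \<in> M" "E \<in> M" "A \<in> M"
  shows "corner_idempotent T E A \<in> M"
proof -
  have "(\<lambda>x. (E \<circ> (T \<circ> E)) x - E x) \<in> M"
    using assms by (intro von_neumann_algebra_closed)
  with assms have "(\<lambda>x. E x + ((T \<circ> E) x - (E \<circ> (T \<circ> E)) x)
      - (A \<circ> (\<lambda>x. (E \<circ> (T \<circ> E)) x - E x)) x) \<in> M"
    by (intro von_neumann_algebra_closed)
  then show ?thesis
    by (simp add: corner_idempotent_def comp_def)
qed

lemma corner_idempotent_projection:
  assumes E: "is_projection E" and "\<And>x. E (A x) = 0"
  shows "E (corner_idempotent T E A x) = E x"
    and "corner_idempotent T E A (E x) = corner_idempotent T E A x"
  using assms by (simp_all add: corner_idempotent_def projection_idem projection_bop bop_add bop_diff)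

lemma onorm_corner_idempotent_le:
  fixes T E A :: "'a::chilbert \<Rightarrow> 'a"
  assumes E: "is_projection E" and "T \<in> bop" "A \<in> bop"
  shows "onorm (corner_idempotent T E A) \<le> 1 + onorm (T \<circ> E) + onorm A * (onorm (T \<circ> E) + 1)"
  unfolding corner_idempotent_def
proof (rule onorm_bound)
  have R: "bounded_linear (T \<circ> E)" and A: "bounded_linear A"
    using assms by (simp_all add: bop_bounded_linear projection_bop bounded_linear_compose comp_def)
  then show "0 \<le> 1 + onorm (T \<circ> E) + onorm A * (onorm (T \<circ> E) + 1)"
    using onorm_pos_le[OF R] onorm_pos_le[OF A] by simp
  fix x
  define t where "t = onorm (T \<circ> E)"
  have R_x: "norm (T (E x)) \<le> t * norm x"
    using onorm[OF R] by (simp add: t_def)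
  have "norm (E (T (E x)) - E x) \<le> norm (T (E x) - x)"
    using norm_projection_le(1)[OF E] by (metis bop_diff projection_bop[OF E])
  also have "\<dots> \<le> (t + 1) * norm x"
    using norm_triangle_ineq4[of "T (E x)" x] R_x by (simp add: algebra_simps)
  finally have "norm (A (E (T (E x)) - E x)) \<le> onorm A * ((t + 1) * norm x)"
    using onorm[OF A] onorm_pos_le[OF A] by (meson mult_left_mono order_trans)
  moreover have "norm (E x) \<le> norm x" "norm (T (E x) - E (T (E x))) \<le> t * norm x"
    using norm_projection_le[OF E] R_x order_trans by blast+
  ultimately have "norm (E x + (T (E x) - E (T (E x))) - A (E (T (E x)) - E x))
      \<le> norm x + t * norm x + onorm A * ((t + 1) * norm x)"
    using norm_triangle_ineq4[of "E x + (T (E x) - E (T (E x)))" "A (E (T (E x)) - E x)"]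
      norm_triangle_ineq[of "E x" "T (E x) - E (T (E x))"] by linarith
  then show "norm (E x + (T (E x) - E (T (E x))) - A (E (T (E x)) - E x))
      \<le> (1 + t + onorm A * (t + 1)) * norm x"
    by (simp add: algebra_simps)
qed

lemma range_eq_of_comp:
  assumes "S \<circ> B = E" and "E \<circ> S = S"
  shows "range S = range E"
proof
  show "range S \<subseteq> range E"
    using assms(2) by (metis comp_apply image_subsetI rangeI)
  show "range E \<subseteq> range S"
    using assms(1) by (metis comp_apply image_subsetI rangeI)
qed

lemma range_corner_idempotent_defect:
  assumes E: "is_projection E" and "(\<lambda>x. E (T (E x)) - E x) \<circ> B = E"
  shows "range (\<lambda>x. T (E x) - corner_idempotent T E A (E x)) = {\<xi> + A \<xi> | \<xi>. \<xi> \<in> range E}"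
proof -
  define S where "S = (\<lambda>x. E (T (E x)) - E x)"
  have "E \<circ> S = S"
    using E by (simp add: fun_eq_iff S_def projection_idem projection_bop bop_diff)
  with assms(2) have "range S = range E"
    unfolding S_def by (rule range_eq_of_comp)
  have "(\<lambda>x. T (E x) - corner_idempotent T E A (E x)) = (\<lambda>\<xi>. \<xi> + A \<xi>) \<circ> S"
    using E by (simp add: fun_eq_iff S_def corner_idempotent_def projection_idem)
  then have "range (\<lambda>x. T (E x) - corner_idempotent T E A (E x)) = (\<lambda>\<xi>. \<xi> + A \<xi>) ` range E"
    using \<open>range S = range E\<close> by (metis image_comp)
  then show ?thesis
    by blast
qed

theorem proposition3p10:
  fixes M :: "('h::chilbert \<Rightarrow> 'h) set" and T E :: "'h \<Rightarrow> 'h"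
  assumes "von_neumann_algebra M"
    and "T \<in> M"
    and "E \<in> M" and "is_projection E"
    and "invertible_in_corner M E (\<lambda>x. E (T (E x)) - E x)"
  shows "\<forall>A \<in> corner (\<lambda>x. x - E x) M E.
           \<exists>P \<in> M. is_idempotent P
             \<and> kerproj P = (\<lambda>x. x - E x)
             \<and> onorm P \<le> 1 + onorm (T \<circ> E) + onorm A * (onorm (T \<circ> E) + 1)
             \<and> range (\<lambda>x. T (E x) - P (E x)) = {\<xi> + A \<xi> | \<xi>. \<xi> \<in> range E}"
proof
  fix A assume "A \<in> corner (\<lambda>x. x - E x) M E"
  then obtain X where "X \<in> M" and A_def: "A = (\<lambda>x. x - E x) \<circ> X \<circ> E"
    by (auto simp: corner_def)
  have "A \<in> M"
    unfolding A_def using assms \<open>X \<in> M\<close> by (intro von_neumann_algebra_closed)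
  have EA: "E (A x) = 0" for x
    by (simp add: A_def projection_apply_complement[OF assms(4)])
  define P where "P = corner_idempotent T E A"
  have "P \<in> M"
    unfolding P_def by (rule von_neumann_algebra_corner_idempotent[OF assms(1-3) \<open>A \<in> M\<close>])
  have EP: "E (P x) = E x" and PE: "P (E x) = P x" for x
    unfolding P_def by (rule corner_idempotent_projection[OF assms(4) EA])+
  note P_idempotent = idempotent_kerproj_complement[OF assms(4)
      von_neumann_algebra_bop[OF assms(1) \<open>P \<in> M\<close>] EP PE]
  have "onorm P \<le> 1 + onorm (T \<circ> E) + onorm A * (onorm (T \<circ> E) + 1)"
    using onorm_corner_idempotent_le[OF assms(4) von_neumann_algebra_bop[OF assms(1,2)]
        von_neumann_algebra_bop[OF assms(1) \<open>A \<in> M\<close>]] by (simp add: P_def)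
  moreover obtain B where "(\<lambda>x. E (T (E x)) - E x) \<circ> B = E"
    using assms(5) unfolding invertible_in_corner_def by blast
  ultimately show "\<exists>P \<in> M. is_idempotent P
      \<and> kerproj P = (\<lambda>x. x - E x)
      \<and> onorm P \<le> 1 + onorm (T \<circ> E) + onorm A * (onorm (T \<circ> E) + 1)
      \<and> range (\<lambda>x. T (E x) - P (E x)) = {\<xi> + A \<xi> | \<xi>. \<xi> \<in> range E}"
    using \<open>P \<in> M\<close> P_idempotent range_corner_idempotent_defect[OF assms(4)] unfolding P_def
    by blast
qed

end
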